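(* If $\Gamma$ is an ellipse which is not a circle, then the matching problem for $\Gamma$ has only the trivial solution (every solution $(f,g)$ consists of constants).
   Context: For a Jordan curve $\Gamma$ with interior domain $\Omega$ and exterior domain $\Omega':=\widehat{\mathbb C}\setminus\overline\Omega$, a solution of the matching problem is a pair $(f,g)$ with: $f$ holomorphic in $\Omega$ and continuous on $\overline\Omega$; $g$ holomorphic in $\Omega'$, continuous on $\overline{\Omega'}$, with $g(\infty)=0$; and $f(\zeta)=\overline{g(\zeta)}$ for all $\zeta\in\Gamma$. It is non-trivial if $f,g$ are non-constant. *)

theory Defs
  imports "HOL-Complex_Analysis.Complex_Analysis"
begin

definition ellipse :: "complex \<Rightarrow> real \<Rightarrow> real \<Rightarrow> real \<Rightarrow> complex set" where
  "ellipse c a b theta =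
     {c + cis theta * Complex (a * cos t) (b * sin t) | t. t \<in> {0..2*pi}}"

definition holomorphic_at_infinity_with_value ::
    "(complex \<Rightarrow> complex) \<Rightarrow> complex \<Rightarrow> bool" where
  "holomorphic_at_infinity_with_value g v \<longleftrightarrow>
     (\<exists>r>0. (\<lambda>w. if w = 0 then v else g (1 / w)) holomorphic_on ball 0 r)"

text \<open>Solution of the matching problem for a Jordan curve \<Gamma> with interior
  domain inside \<Gamma> and exterior domain (in the sphere) outside \<Gamma> \<union> {\<infinity>}.\<close>
definition matching_solution ::
    "complex set \<Rightarrow> (complex \<Rightarrow> complex) \<Rightarrow> (complex \<Rightarrow> complex) \<Rightarrow> bool" where
  "matching_solution \<Gamma> f g \<longleftrightarrow>
     f holomorphic_on inside \<Gamma> \<and> continuous_on (closure (inside \<Gamma>)) f \<and>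
     g holomorphic_on outside \<Gamma> \<and> continuous_on (closure (outside \<Gamma>)) g \<and>
     holomorphic_at_infinity_with_value g 0 \<and>
     (\<forall>\<zeta>\<in>\<Gamma>. f \<zeta> = cnj (g \<zeta>))"

end

theory Submission
  imports Defs
begin

text \<open>
  With \<open>A = (a + b) / 2\<close> and \<open>B = (a - b) / 2 \<noteq> 0\<close>, the Joukowski map
  \<open>J w = c + e\<^sup>i\<^sup>\<theta> (A w + B / w)\<close> maps the unit circle onto the ellipse, \<open>|w| > 1\<close> onto its
  exterior and the annulus \<open>|B| / A < |w| < 1\<close> into its interior, and \<open>J (\<kappa> / w) = J w\<close> for
  \<open>\<kappa> = B / A\<close>. The reflection \<open>G w = cnj (g (J (1 / cnj w)))\<close> is holomorphic in the unit
  disc with \<open>G 0 = 0\<close> because \<open>g (\<infinity>) = 0\<close>. On the unit circle the matching condition reads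
  \<open>f \<circ> J = G\<close>, so by Schwarz reflection \<open>f \<circ> J = G\<close> on the annulus. Hence \<open>G\<close> is invariant
  under \<open>w \<mapsto> \<kappa> / w\<close>, extends to a bounded entire function and vanishes by Liouville's
  theorem. Thus \<open>g = 0\<close> outside the ellipse, so \<open>f = 0\<close> on it and, by the maximum modulus
  principle, inside.
\<close>

section \<open>Vanishing theorems for holomorphic functions\<close>

lemma holomorphic_at_infinity_imp_tendsto:
  assumes "holomorphic_at_infinity_with_value g v"
  shows "(g \<longlongrightarrow> v) at_infinity"
proof -
  define h where "h = (\<lambda>w. if w = 0 then v else g (1 / w))"
  obtain r where "r > 0" and "h holomorphic_on ball 0 r"
    using assms by (auto simp: holomorphic_at_infinity_with_value_def h_def)
  then have "isCont h 0"
    by (meson centre_in_ball holomorphic_on_imp_continuous_on continuous_on_eq_continuous_at open_ball)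
  then have "(h \<longlongrightarrow> v) (at 0)"
    by (simp add: isCont_def h_def)
  then have "((\<lambda>w. g (1 / w)) \<longlongrightarrow> v) (at 0)"
    by (rule Lim_transform_eventually) (auto simp: eventually_at_filter h_def)
  then show ?thesis
    by (rule lim_zero_infinity)
qed

lemma holomorphic_strip_vanishing_on_real_axis:
  fixes L :: "complex \<Rightarrow> complex"
  assumes "0 < h"
    and hol: "L holomorphic_on {s. 0 < Im s \<and> Im s < h}"
    and cont: "continuous_on {s. 0 \<le> Im s \<and> Im s < h} L"
    and real_zero: "\<And>x. L (of_real x) = 0"
    and s: "0 \<le> Im s" "Im s < h"
  shows "L s = 0"
proof -
  define S where "S = {s. \<bar>Im s\<bar> < h}"
  define M where "M z = (if 0 \<le> Im z then L z else cnj (L (cnj z)))" for z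
  have "open S"
    unfolding S_def by (intro open_Collect_less continuous_intros)
  have "S = {s. Im s < h} \<inter> {s. - h < Im s}"
    by (auto simp: S_def)
  then have "convex S"
    by (simp add: convex_Int convex_halfspace_Im_lt convex_halfspace_Im_gt)
  have S_upper: "S \<inter> {z. 0 < Im z} = {s. 0 < Im s \<and> Im s < h}"
    and S_closed_upper: "S \<inter> {z. 0 \<le> Im z} = {s. 0 \<le> Im s \<and> Im s < h}"
    by (auto simp: S_def)
  have hol_M: "M holomorphic_on S"
    unfolding M_def
  proof (rule Schwarz_reflection[OF \<open>open S\<close>])
    show "cnj ` S \<subseteq> S" by (auto simp: S_def)
  qed (use hol cont real_zero in \<open>auto simp: S_upper S_closed_upper elim!: Reals_cases\<close>)
  have M_real_zero: "M x = 0" if "x \<in> \<real>" for x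
    using that real_zero by (auto simp: M_def elim!: Reals_cases)
  have limit_point: "(0::complex) islimpt \<real>"
  proof (unfold islimpt_approachable, intro allI impI)
    fix e :: real
    assume "0 < e"
    then show "\<exists>x\<in>\<real>. x \<noteq> (0::complex) \<and> dist x 0 < e"
      by (intro bexI[of _ "complex_of_real (e / 2)"]) (auto simp: dist_norm)
  qed
  have "\<real> \<subseteq> S" "0 \<in> S" "s \<in> S"
    using \<open>0 < h\<close> s by (auto simp: S_def complex_is_Real_iff)
  then have "M s = 0"
    using analytic_continuation[OF hol_M \<open>open S\<close> convex_connected[OF \<open>convex S\<close>] _ _
        limit_point M_real_zero] by blast
  then show ?thesis
    using s by (simp add: M_def)
qed

lemma holomorphic_annulus_vanishing_on_unit_circle:
  fixes K :: "complex \<Rightarrow> complex"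
  assumes r: "0 < r" "r < 1"
    and hol: "K holomorphic_on {w. r < cmod w \<and> cmod w < 1}"
    and cont: "continuous_on {w. r < cmod w \<and> cmod w \<le> 1} K"
    and circle_zero: "\<And>w. cmod w = 1 \<Longrightarrow> K w = 0"
    and w: "r < cmod w" "cmod w \<le> 1"
  shows "K w = 0"
proof -
  txt \<open>Via \<open>s \<mapsto> exp (\<i> s)\<close> the strip \<open>0 \<le> Im s < - ln r\<close> covers the annulus and the real
    axis covers the unit circle.\<close>
  define h where "h = - ln r"
  define L where "L s = K (exp (\<i> * s))" for s
  have norm_exp: "cmod (exp (\<i> * s)) = exp (- Im s)" for s
    by (simp add: norm_exp_eq_Re)
  have exp_in_annulus: "r < cmod (exp (\<i> * s))" if "Im s < h" for s
  proof -
    have "exp (ln r) < exp (- Im s)"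
      using that by (simp add: h_def)
    then show ?thesis
      using r by (simp add: norm_exp)
  qed
  have hol_L: "L holomorphic_on {s. 0 < Im s \<and> Im s < h}"
    unfolding L_def
  proof (rule holomorphic_on_compose_gen[OF _ hol, unfolded comp_def])
    show "(\<lambda>s. exp (\<i> * s)) holomorphic_on {s. 0 < Im s \<and> Im s < h}"
      by (intro holomorphic_intros)
    show "(\<lambda>s. exp (\<i> * s)) ` {s. 0 < Im s \<and> Im s < h} \<subseteq> {w. r < cmod w \<and> cmod w < 1}"
      using exp_in_annulus by (auto simp: norm_exp)
  qed
  have cont_L: "continuous_on {s. 0 \<le> Im s \<and> Im s < h} L"
    unfolding L_def
  proof (rule continuous_on_compose2[OF cont])
    show "continuous_on {s. 0 \<le> Im s \<and> Im s < h} (\<lambda>s. exp (\<i> * s))"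
      by (intro continuous_intros)
    show "(\<lambda>s. exp (\<i> * s)) ` {s. 0 \<le> Im s \<and> Im s < h} \<subseteq> {w. r < cmod w \<and> cmod w \<le> 1}"
      using exp_in_annulus by (auto simp: norm_exp)
  qed
  have real_zero: "L (of_real x) = 0" for x
    by (simp add: L_def circle_zero norm_exp)
  have "0 < cmod w"
    using w r by linarith
  then have "0 \<le> Im (- \<i> * Ln w)" "Im (- \<i> * Ln w) < h"
    using w r by (simp_all add: h_def)
  moreover have "0 < h"
    using r by (simp add: h_def)
  ultimately have "L (- \<i> * Ln w) = 0"
    using holomorphic_strip_vanishing_on_real_axis[OF _ hol_L cont_L real_zero] by blast
  then show ?thesis
    using \<open>0 < cmod w\<close> by (simp add: L_def)
qed

lemma holomorphic_inversion_invariant_imp_constant: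
  fixes H :: "complex \<Rightarrow> complex" and \<kappa> :: complex
  assumes hol: "H holomorphic_on ball 0 1" and "cmod \<kappa> < 1"
    and invariant: "\<And>w. cmod \<kappa> < cmod w \<Longrightarrow> cmod w < 1 \<Longrightarrow> H (\<kappa> / w) = H w"
    and w: "cmod w < 1"
  shows "H w = H 0"
proof -
  define E where "E w = (if cmod w < 1 then H w else H (\<kappa> / w))" for w
  define Outer where "Outer = {w. cmod \<kappa> < cmod w}"
  have "open Outer"
    unfolding Outer_def by (intro open_Collect_less continuous_intros)
  have inversion_into_disc: "(\<lambda>w. \<kappa> / w) ` Outer \<subseteq> ball 0 1"
  proof clarify
    fix w
    assume "w \<in> Outer"
    then have "cmod \<kappa> < cmod w"
      by (simp add: Outer_def)
    moreover have "0 < cmod w"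
      using \<open>cmod \<kappa> < cmod w\<close> norm_ge_zero[of \<kappa>] by linarith
    ultimately show "\<kappa> / w \<in> ball 0 1"
      by (simp add: norm_divide)
  qed
  have "E holomorphic_on ball 0 1"
    using hol by (rule holomorphic_transform) (simp add: E_def)
  moreover have "E holomorphic_on Outer"
  proof (rule holomorphic_transform)
    have "(\<lambda>w. \<kappa> / w) holomorphic_on Outer"
    proof (intro holomorphic_intros)
      show "w \<noteq> 0" if "w \<in> Outer" for w
        using that norm_ge_zero[of \<kappa>] by (auto simp: Outer_def)
    qed
    then show "(\<lambda>w. H (\<kappa> / w)) holomorphic_on Outer"
      by (rule holomorphic_on_compose_gen[OF _ hol inversion_into_disc, unfolded comp_def])
    show "H (\<kappa> / w) = E w" if "w \<in> Outer" for w
      using that invariant by (simp add: E_def Outer_def)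
  qed
  ultimately have "E holomorphic_on ball 0 1 \<union> Outer"
    by (rule holomorphic_on_Un[OF _ _ open_ball \<open>open Outer\<close>])
  moreover have "ball 0 1 \<union> Outer = UNIV"
    using \<open>cmod \<kappa> < 1\<close> by (auto simp: Outer_def)
  ultimately have "E holomorphic_on UNIV"
    by simp
  moreover have "((\<lambda>w. H (\<kappa> / w)) \<longlongrightarrow> H 0) at_infinity"
  proof (rule isCont_tendsto_compose[of _ H])
    show "isCont H 0"
      using hol by (meson centre_in_ball zero_less_one holomorphic_on_imp_continuous_on
          continuous_on_eq_continuous_at open_ball)
    show "((\<lambda>w. \<kappa> / w) \<longlongrightarrow> 0) at_infinity"
      using tendsto_mult[OF tendsto_const tendsto_inverse_0, of \<kappa>]
      by (simp add: divide_inverse)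
  qed
  then have "(E \<longlongrightarrow> H 0) at_infinity"
    by (rule Lim_transform_eventually)
       (auto simp: E_def eventually_at_infinity intro!: exI[of _ 1])
  ultimately have "E w = H 0"
    by (rule Liouville_weak)
  then show ?thesis
    using w by (simp add: E_def)
qed

lemma holomorphic_vanishing_on_frontier:
  fixes f :: "complex \<Rightarrow> complex"
  assumes "f holomorphic_on S" "open S" "bounded S" "continuous_on (closure S) f"
    and "\<And>z. z \<in> frontier S \<Longrightarrow> f z = 0"
    and z: "z \<in> closure S"
  shows "f z = 0"
proof (rule continuous_constant_on_closure[OF \<open>continuous_on (closure S) f\<close> _ z])
  fix x
  assume "x \<in> S"
  have "norm (f x) \<le> 0"
    by (rule maximum_modulus_frontier[of f S]) (use assms \<open>x \<in> S\<close> in \<open>simp_all add: interior_open\<close>)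
  then show "f x = 0"
    by simp
qed

section \<open>Ellipses and the Joukowski map\<close>

lemma joukowski_norm_identity:
  fixes A B s p q :: real
  assumes "s \<noteq> 0" "s = (A + B)\<^sup>2 * p\<^sup>2 + (A - B)\<^sup>2 * q\<^sup>2"
  shows "((A + B / s) * p)\<^sup>2 + ((A - B / s) * q)\<^sup>2 - 1 = (s - 1) * (A\<^sup>2 * s - B\<^sup>2) * (p\<^sup>2 + q\<^sup>2) / s\<^sup>2"
proof -
  txt \<open>Both \<open>(A s + B)\<^sup>2 - s (A + B)\<^sup>2\<close> and \<open>(A s - B)\<^sup>2 - s (A - B)\<^sup>2\<close> equal
    \<open>(s - 1) (A\<^sup>2 s - B\<^sup>2)\<close>.\<close>
  have "((A + B / s) * p)\<^sup>2 + ((A - B / s) * q)\<^sup>2 - 1 =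
      ((A * s + B)\<^sup>2 * p\<^sup>2 + (A * s - B)\<^sup>2 * q\<^sup>2 - s * s) / s\<^sup>2"
    using assms(1) by (simp add: field_simps power2_eq_square)
  also have "s * s = s * ((A + B)\<^sup>2 * p\<^sup>2 + (A - B)\<^sup>2 * q\<^sup>2)"
    using assms(2) by simp
  finally show ?thesis
    by (simp add: power2_eq_square algebra_simps)
qed

lemma sgn_power2_minus_1:
  fixes x :: real
  assumes "0 \<le> x"
  shows "sgn (x\<^sup>2 - 1) = sgn (x - 1)"
proof -
  have "x\<^sup>2 - 1 = (x - 1) * (x + 1)"
    by (simp add: power2_eq_square algebra_simps)
  then show ?thesis
    using assms by (simp add: sgn_mult)
qed

locale ellipse_param =
  fixes c :: complex and a b \<theta> :: real
  assumes a_pos: "0 < a" and b_pos: "0 < b"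
begin

abbreviation \<Gamma> :: "complex set" where
  "\<Gamma> \<equiv> ellipse c a b \<theta>"

definition ellipse_stretch :: "complex \<Rightarrow> complex" where
  "ellipse_stretch w = cis \<theta> * Complex (a * Re w) (b * Im w)"

definition ellipse_point :: "complex \<Rightarrow> complex" where
  "ellipse_point w = c + ellipse_stretch w"

definition ellipse_coord :: "complex \<Rightarrow> complex" where
  "ellipse_coord z = Complex (Re (cis (- \<theta>) * (z - c)) / a) (Im (cis (- \<theta>) * (z - c)) / b)"

lemma ellipse_coord_point [simp]: "ellipse_coord (ellipse_point w) = w"
proof -
  have "cis (- \<theta>) * (ellipse_point w - c) = Complex (a * Re w) (b * Im w)"
    by (simp add: ellipse_point_def ellipse_stretch_def cis_mult flip: mult.assoc)
  then show ?thesis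
    using a_pos b_pos by (simp add: ellipse_coord_def complex_eq_iff)
qed

lemma ellipse_point_coord [simp]: "ellipse_point (ellipse_coord z) = z"
proof -
  have "Complex (a * Re (ellipse_coord z)) (b * Im (ellipse_coord z)) = cis (- \<theta>) * (z - c)"
    using a_pos b_pos by (simp add: ellipse_coord_def complex_eq_iff)
  then show ?thesis
    by (simp add: ellipse_point_def ellipse_stretch_def cis_mult flip: mult.assoc)
qed

lemma image_ellipse_point: "ellipse_point ` S = ellipse_coord -` S"
  by (force simp: image_iff)

lemma inj_ellipse_point: "inj ellipse_point"
  by (metis ellipse_coord_point injI)

lemma inj_ellipse_stretch: "inj ellipse_stretch"
  by (metis ellipse_coord_point ellipse_point_def add_left_cancel injI)

lemma linear_ellipse_stretch: "linear ellipse_stretch"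
  by (rule linearI) (simp_all add: ellipse_stretch_def complex_eq_iff algebra_simps scaleR_conv_of_real)

lemma ellipse_point_eq_translation: "ellipse_point = (+) c \<circ> ellipse_stretch"
  by (simp add: ellipse_point_def fun_eq_iff)

lemma continuous_ellipse_point: "continuous_on S ellipse_point"
  unfolding ellipse_point_eq_translation
  by (intro continuous_on_compose continuous_intros linear_continuous_on)
    (simp add: linear_ellipse_stretch flip: linear_conv_bounded_linear)

lemma ellipse_eq_image_sphere: "\<Gamma> = ellipse_point ` sphere 0 1"
proof -
  have "sphere 0 1 = {cis t |t. t \<in> {0..2 * pi}}"
  proof (intro set_eqI iffI)
    fix w :: complex
    assume "w \<in> sphere 0 1"
    then have "(Re w)\<^sup>2 + (Im w)\<^sup>2 = 1"
      using cmod_power2[of w] by simp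
    then obtain t where "0 \<le> t" "t < 2 * pi" "Re w = cos t" "Im w = sin t"
      using sincos_total_2pi by metis
    then show "w \<in> {cis t |t. t \<in> {0..2 * pi}}"
      by (auto simp: complex_eq_iff)
  qed auto
  then have "ellipse_point ` sphere 0 1 = {ellipse_point (cis t) |t. t \<in> {0..2 * pi}}"
    by auto
  then show ?thesis
    by (simp add: ellipse_def ellipse_point_def ellipse_stretch_def)
qed

lemma
  shows convex_ellipse_region: "convex (ellipse_point ` cball 0 1)"
    and compact_ellipse_region: "compact (ellipse_point ` cball 0 1)"
    and interior_ellipse_region: "interior (ellipse_point ` cball 0 1) = ellipse_point ` ball 0 1"
proof -
  show "convex (ellipse_point ` cball 0 1)"
    unfolding ellipse_point_eq_translation image_comp [symmetric]
    by (intro convex_translation convex_linear_image[OF linear_ellipse_stretch] convex_cball)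
  show "compact (ellipse_point ` cball 0 1)"
    by (intro compact_continuous_image continuous_ellipse_point compact_cball)
  show "interior (ellipse_point ` cball 0 1) = ellipse_point ` ball 0 1"
    unfolding ellipse_point_eq_translation image_comp [symmetric]
    by (simp add: interior_translation interior_injective_linear_image[OF linear_ellipse_stretch inj_ellipse_stretch])
qed

lemma frontier_ellipse_region: "frontier (ellipse_point ` cball 0 1) = \<Gamma>"
proof -
  have "frontier (ellipse_point ` cball 0 1) = ellipse_point ` cball 0 1 - ellipse_point ` ball 0 1"
    using compact_ellipse_region
    by (simp add: frontier_def interior_ellipse_region compact_imp_closed closure_closed)
  also have "\<dots> = ellipse_point ` sphere 0 1"
    by (simp add: cball_diff_eq_sphere flip: image_set_diff[OF inj_ellipse_point])
  finally show ?thesis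
    by (simp add: ellipse_eq_image_sphere)
qed

lemma inside_ellipse: "inside \<Gamma> = ellipse_point ` ball 0 1"
  using inside_frontier_eq_interior[OF compact_imp_bounded[OF compact_ellipse_region]
      convex_ellipse_region]
  by (simp add: frontier_ellipse_region interior_ellipse_region)

lemma outside_ellipse: "outside \<Gamma> = ellipse_point ` (- cball 0 1)"
proof -
  have "outside \<Gamma> = - ellipse_point ` cball 0 1"
    using outside_frontier_eq_complement_closure[OF compact_imp_bounded[OF compact_ellipse_region]
        convex_ellipse_region]
    by (simp add: frontier_ellipse_region compact_imp_closed[OF compact_ellipse_region] closure_closed)
  then show ?thesis
    by (simp only: image_ellipse_point vimage_Compl)
qed

lemma mem_ellipse_iff: "z \<in> \<Gamma> \<longleftrightarrow> cmod (ellipse_coord z) = 1"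
  and mem_inside_ellipse_iff: "z \<in> inside \<Gamma> \<longleftrightarrow> cmod (ellipse_coord z) < 1"
  and mem_outside_ellipse_iff: "z \<in> outside \<Gamma> \<longleftrightarrow> 1 < cmod (ellipse_coord z)"
  unfolding inside_ellipse outside_ellipse unfolding ellipse_eq_image_sphere image_ellipse_point
  by (simp_all add: not_le)

lemma compact_ellipse: "compact \<Gamma>"
  unfolding ellipse_eq_image_sphere
  by (intro compact_continuous_image continuous_ellipse_point compact_sphere)

lemma ellipse_subset_closure_inside: "\<Gamma> \<subseteq> closure (inside \<Gamma>)"
  and ellipse_subset_closure_outside: "\<Gamma> \<subseteq> closure (outside \<Gamma>)"
proof -
  have "ellipse_point ` closure S \<subseteq> closure (ellipse_point ` S)" for S
    by (intro image_closure_subset continuous_ellipse_point closed_closure closure_subset)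
  moreover have "sphere 0 1 \<subseteq> closure (ball (0::complex) 1)" "sphere 0 1 \<subseteq> closure (- cball (0::complex) 1)"
    by (auto simp: closure_complement)
  ultimately show "\<Gamma> \<subseteq> closure (inside \<Gamma>)" "\<Gamma> \<subseteq> closure (outside \<Gamma>)"
    unfolding inside_ellipse outside_ellipse unfolding ellipse_eq_image_sphere
    by (meson image_mono order_trans)+
qed

definition A :: real where "A = (a + b) / 2"
definition B :: real where "B = (a - b) / 2"

definition joukowski :: "complex \<Rightarrow> complex" where
  "joukowski w = c + cis \<theta> * (of_real A * w + of_real B / w)"

definition inner_radius :: real where
  "inner_radius = \<bar>B\<bar> / A"

lemma A_pos: "0 < A"
  using a_pos b_pos by (simp add: A_def)

lemma inner_radius_nonneg: "0 \<le> inner_radius"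
  and inner_radius_less_1: "inner_radius < 1"
  using a_pos b_pos A_pos by (auto simp: inner_radius_def A_def B_def)

lemma ellipse_coord_joukowski:
  assumes "w \<noteq> 0"
  shows "ellipse_coord (joukowski w) =
    Complex ((A + B / (cmod w)\<^sup>2) * (Re w / a)) ((A - B / (cmod w)\<^sup>2) * (Im w / b))"
proof -
  have "cis (- \<theta>) * (joukowski w - c) = of_real A * w + of_real B / w"
    by (simp add: joukowski_def cis_mult flip: mult.assoc)
  moreover have "Re (of_real A * w + of_real B / w) = (A + B / (cmod w)\<^sup>2) * Re w"
    and "Im (of_real A * w + of_real B / w) = (A - B / (cmod w)\<^sup>2) * Im w"
    by (simp_all add: Re_divide Im_divide cmod_power2 algebra_simps)
  ultimately show ?thesis
    by (simp add: ellipse_coord_def)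
qed

lemma norm_ellipse_coord_joukowski:
  assumes "w \<noteq> 0"
  shows "(cmod (ellipse_coord (joukowski w)))\<^sup>2 - 1 =
    ((cmod w)\<^sup>2 - 1) * (A\<^sup>2 * (cmod w)\<^sup>2 - B\<^sup>2) * ((Re w / a)\<^sup>2 + (Im w / b)\<^sup>2) / ((cmod w)\<^sup>2)\<^sup>2"
proof (subst cmod_power2, unfold ellipse_coord_joukowski[OF assms] complex.sel,
    rule joukowski_norm_identity)
  show "(cmod w)\<^sup>2 \<noteq> 0"
    using assms by simp
  have "a = A + B" "b = A - B"
    by (simp_all add: A_def B_def field_simps)
  then show "(cmod w)\<^sup>2 = (A + B)\<^sup>2 * (Re w / a)\<^sup>2 + (A - B)\<^sup>2 * (Im w / b)\<^sup>2"
    using a_pos b_pos by (simp add: cmod_power2 power_divide)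
qed

lemma sgn_norm_ellipse_coord_joukowski:
  assumes "inner_radius < cmod w"
  shows "sgn (cmod (ellipse_coord (joukowski w)) - 1) = sgn (cmod w - 1)"
proof -
  have "w \<noteq> 0"
    using assms inner_radius_nonneg by auto
  have "\<bar>B\<bar> < A * cmod w"
    using assms A_pos by (simp add: inner_radius_def field_simps)
  then have "\<bar>B\<bar>\<^sup>2 < (A * cmod w)\<^sup>2"
    by (intro power_strict_mono) simp_all
  then have "0 < A\<^sup>2 * (cmod w)\<^sup>2 - B\<^sup>2"
    by (simp add: power_mult_distrib)
  moreover have "0 < (Re w / a)\<^sup>2 + (Im w / b)\<^sup>2"
    using \<open>w \<noteq> 0\<close> a_pos b_pos by (simp add: complex_eq_iff sum_power2_gt_zero_iff)
  moreover have "0 < ((cmod w)\<^sup>2)\<^sup>2"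
    using \<open>w \<noteq> 0\<close> by simp
  ultimately have P_pos: "0 < (A\<^sup>2 * (cmod w)\<^sup>2 - B\<^sup>2) * ((Re w / a)\<^sup>2 + (Im w / b)\<^sup>2) / ((cmod w)\<^sup>2)\<^sup>2"
    (is "0 < ?P") by simp
  have factor: "(cmod (ellipse_coord (joukowski w)))\<^sup>2 - 1 = ((cmod w)\<^sup>2 - 1) * ?P"
    unfolding norm_ellipse_coord_joukowski[OF \<open>w \<noteq> 0\<close>] by simp
  have "sgn (cmod (ellipse_coord (joukowski w)) - 1) = sgn ((cmod (ellipse_coord (joukowski w)))\<^sup>2 - 1)"
    by (simp add: sgn_power2_minus_1)
  also have "\<dots> = sgn ((cmod w)\<^sup>2 - 1)"
    using P_pos by (simp only: factor sgn_mult sgn_pos mult_1_right)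
  also have "\<dots> = sgn (cmod w - 1)"
    by (simp add: sgn_power2_minus_1)
  finally show ?thesis .
qed

lemma joukowski_mem_inside_iff: "inner_radius < cmod w \<Longrightarrow> joukowski w \<in> inside \<Gamma> \<longleftrightarrow> cmod w < 1"
  and joukowski_mem_ellipse_iff: "inner_radius < cmod w \<Longrightarrow> joukowski w \<in> \<Gamma> \<longleftrightarrow> cmod w = 1"
  and joukowski_mem_outside_iff: "inner_radius < cmod w \<Longrightarrow> joukowski w \<in> outside \<Gamma> \<longleftrightarrow> 1 < cmod w"
  by (metis sgn_norm_ellipse_coord_joukowski mem_inside_ellipse_iff mem_ellipse_iff
      mem_outside_ellipse_iff sgn_less sgn_greater sgn_0_0 diff_less_0_iff_less diff_gt_0_iff_gt
      eq_iff_diff_eq_0)+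

lemma joukowski_in_closure_inside:
  assumes "inner_radius < cmod w" "cmod w \<le> 1"
  shows "joukowski w \<in> closure (inside \<Gamma>)"
proof (cases "cmod w = 1")
  case True
  then show ?thesis
    using assms joukowski_mem_ellipse_iff ellipse_subset_closure_inside by blast
next
  case False
  then show ?thesis
    using assms joukowski_mem_inside_iff closure_subset by fastforce
qed

lemma joukowski_in_closure_outside:
  assumes "1 \<le> cmod w"
  shows "joukowski w \<in> closure (outside \<Gamma>)"
proof -
  have "inner_radius < cmod w"
    using assms inner_radius_less_1 by linarith
  show ?thesis
  proof (cases "cmod w = 1")
    case True
    then show ?thesis
      using \<open>inner_radius < cmod w\<close> joukowski_mem_ellipse_iff ellipse_subset_closure_outside
      by blast
  next
    case False
    then show ?thesis
      using assms \<open>inner_radius < cmod w\<close> joukowski_mem_outside_iff closure_subset by fastforce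
  qed
qed

lemma joukowski_tendsto_infinity: "filterlim joukowski at_infinity at_infinity"
proof -
  have "filterlim (\<lambda>w. cis \<theta> * of_real A * w) at_infinity at_infinity"
    using A_pos by (intro tendsto_mult_filterlim_at_infinity[OF tendsto_const] filterlim_ident) simp
  moreover have "((\<lambda>w. c + cis \<theta> * of_real B / w) \<longlongrightarrow> c) at_infinity"
    using tendsto_add[OF tendsto_const tendsto_mult[OF tendsto_const tendsto_inverse_0], of c "cis \<theta> * of_real B"]
    by (simp add: divide_inverse)
  ultimately have "filterlim (\<lambda>w. (c + cis \<theta> * of_real B / w) + cis \<theta> * of_real A * w) at_infinity at_infinity"
    by (rule tendsto_add_filterlim_at_infinity[rotated])
  moreover have "joukowski = (\<lambda>w. (c + cis \<theta> * of_real B / w) + cis \<theta> * of_real A * w)"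
    by (simp add: fun_eq_iff joukowski_def algebra_simps)
  ultimately show ?thesis
    by simp
qed

end

locale noncircular_ellipse = ellipse_param +
  assumes a_ne_b: "a \<noteq> b"
begin

lemma B_nonzero: "B \<noteq> 0"
  using a_ne_b by (simp add: B_def)

lemma inner_radius_pos: "0 < inner_radius"
  using A_pos B_nonzero by (simp add: inner_radius_def)

lemma norm_B_div_A_eq_inner_radius: "cmod (of_real (B / A)) = inner_radius"
  using A_pos by (simp add: inner_radius_def norm_divide)

lemma joukowski_inversion: "w \<noteq> 0 \<Longrightarrow> joukowski (of_real (B / A) / w) = joukowski w"
  using A_pos B_nonzero by (simp add: joukowski_def field_simps)

lemma joukowski_surj: "\<exists>w. inner_radius < cmod w \<and> joukowski w = z"
proof -
  define u where "u = cis (- \<theta>) * (z - c)"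
  define d where "d = csqrt (u\<^sup>2 - 4 * of_real A * of_real B)"
  define w where "w = (u + d) / (2 * of_real A)"
  txt \<open>\<open>w\<close> is a root of \<open>A w\<^sup>2 - u w + B\<close>; the other root \<open>\<kappa> / w\<close> has the same image, and one
    of the two lies outside the disc of radius \<open>inner_radius = |\<kappa>|\<close>.\<close>
  have "of_real A * w\<^sup>2 - u * w + of_real B = (d\<^sup>2 - (u\<^sup>2 - 4 * of_real A * of_real B)) / (4 * of_real A)"
    using A_pos by (simp add: w_def field_simps power2_eq_square)
  also have "\<dots> = 0"
    by (simp add: d_def)
  finally have "of_real A * w\<^sup>2 - u * w + of_real B = 0" .
  moreover from this have "w \<noteq> 0"
    using B_nonzero by auto
  ultimately have "of_real A * w + of_real B / w = u"
    by (simp add: field_simps power2_eq_square)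
  then have "joukowski w = z"
    by (simp add: joukowski_def u_def cis_mult flip: mult.assoc)
  show ?thesis
  proof (cases "inner_radius < cmod w")
    case False
    then have "1 \<le> inner_radius / cmod w"
      using \<open>w \<noteq> 0\<close> by simp
    moreover have "cmod (of_real (B / A) / w) = inner_radius / cmod w"
      by (simp only: norm_divide norm_B_div_A_eq_inner_radius)
    ultimately have "inner_radius < cmod (of_real (B / A) / w)"
      using inner_radius_less_1 by simp
    then show ?thesis
      using joukowski_inversion[OF \<open>w \<noteq> 0\<close>] \<open>joukowski w = z\<close> by metis
  qed (use \<open>joukowski w = z\<close> in blast)
qed

end

section \<open>Solutions of the matching problem on an ellipse\<close>

locale ellipse_matching = noncircular_ellipse +
  fixes f g :: "complex \<Rightarrow> complex"
  assumes matching: "matching_solution (ellipse c a b \<theta>) f g"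
begin

lemma f_holomorphic: "f holomorphic_on inside \<Gamma>"
  and f_continuous: "continuous_on (closure (inside \<Gamma>)) f"
  and g_holomorphic: "g holomorphic_on outside \<Gamma>"
  and g_continuous: "continuous_on (closure (outside \<Gamma>)) g"
  and g_tendsto_0: "(g \<longlongrightarrow> 0) at_infinity"
  and f_eq_cnj_g: "z \<in> \<Gamma> \<Longrightarrow> f z = cnj (g z)"
  using matching holomorphic_at_infinity_imp_tendsto by (auto simp: matching_solution_def)

definition reflected_g :: "complex \<Rightarrow> complex" where
  "reflected_g w = (if w = 0 then 0 else cnj (g (joukowski (1 / cnj w))))"

lemma holomorphic_reflected_g: "reflected_g holomorphic_on ball 0 1"
proof -
  define D where "D = ball (0::complex) 1 - {0}"
  have "open (cnj ` outside \<Gamma>)"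
    unfolding image_cnj_conv_vimage_cnj
    by (intro open_vimage open_outside compact_imp_closed compact_ellipse continuous_intros)
  then have "(cnj \<circ> g \<circ> cnj) holomorphic_on cnj ` outside \<Gamma>"
    by (intro holomorphic_on_compose_cnj_cnj) (simp_all add: image_image g_holomorphic)
  moreover have "(\<lambda>w. cnj (joukowski (1 / cnj w))) holomorphic_on D"
  proof -
    have "cnj (joukowski (1 / cnj w)) = cnj c + cnj (cis \<theta>) * (of_real A / w + of_real B * w)" for w
      by (simp add: joukowski_def)
    then show ?thesis
      unfolding D_def by (simp only:) (intro holomorphic_intros; simp)
  qed
  moreover have "cnj (joukowski (1 / cnj w)) \<in> cnj ` outside \<Gamma>" if "w \<in> D" for w
  proof -
    have "1 < cmod (1 / cnj w)"
      using that by (simp add: D_def norm_divide)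
    then have "joukowski (1 / cnj w) \<in> outside \<Gamma>"
      using inner_radius_less_1 joukowski_mem_outside_iff by simp
    then show ?thesis
      by blast
  qed
  ultimately have "(\<lambda>w. cnj (g (joukowski (1 / cnj w)))) holomorphic_on D"
    using holomorphic_on_compose_gen[of "\<lambda>w. cnj (joukowski (1 / cnj w))" D "cnj \<circ> g \<circ> cnj"]
    by (auto simp: comp_def)
  moreover have "filterlim (\<lambda>w. 1 / cnj w) at_infinity (at (0::complex))"
    using filterlim_inverse_at_infinity[where 'a=complex]
    by (simp add: filterlim_at_infinity_conv_norm_at_top norm_divide norm_inverse inverse_eq_divide)
  then have "((\<lambda>w. cnj (g (joukowski (1 / cnj w)))) \<longlongrightarrow> 0) (at 0)"
    using filterlim_compose[OF g_tendsto_0 filterlim_compose[OF joukowski_tendsto_infinity]]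
    by (metis complex_cnj_zero tendsto_cnj)
  ultimately show ?thesis
    unfolding reflected_g_def D_def by (intro removable_singularity) simp_all
qed

lemma f_joukowski_eq_reflected_g:
  assumes "inner_radius < cmod w" "cmod w \<le> 1"
  shows "f (joukowski w) = reflected_g w"
proof -
  define K where "K w = f (joukowski w) - cnj (g (joukowski (1 / cnj w)))" for w
  let ?U = "{w. inner_radius < cmod w \<and> cmod w < 1}"
  let ?U1 = "{w. inner_radius < cmod w \<and> cmod w \<le> 1}"
  have nonzero: "w \<noteq> 0" if "inner_radius < cmod w" for w
    using that inner_radius_nonneg by auto
  have "K holomorphic_on ?U"
  proof (rule holomorphic_transform)
    have "joukowski holomorphic_on ?U"
      unfolding joukowski_def using nonzero by (intro holomorphic_intros) auto
    moreover have "joukowski ` ?U \<subseteq> inside \<Gamma>"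
      using joukowski_mem_inside_iff by auto
    ultimately have "(\<lambda>w. f (joukowski w)) holomorphic_on ?U"
      using holomorphic_on_compose_gen[OF _ f_holomorphic] by (simp add: comp_def)
    moreover have "reflected_g holomorphic_on ?U"
      by (rule holomorphic_on_subset[OF holomorphic_reflected_g]) auto
    ultimately show "(\<lambda>w. f (joukowski w) - reflected_g w) holomorphic_on ?U"
      by (intro holomorphic_intros)
    show "f (joukowski w) - reflected_g w = K w" if "w \<in> ?U" for w
      using that nonzero by (simp add: K_def reflected_g_def)
  qed
  moreover have "continuous_on ?U1 K"
  proof -
    have "continuous_on ?U1 joukowski"
      and "continuous_on ?U1 (\<lambda>w. joukowski (1 / cnj w))"
      unfolding joukowski_def using nonzero by (auto intro!: continuous_intros)
    moreover have "joukowski ` ?U1 \<subseteq> closure (inside \<Gamma>)"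
      using joukowski_in_closure_inside by auto
    moreover have "(\<lambda>w. joukowski (1 / cnj w)) ` ?U1 \<subseteq> closure (outside \<Gamma>)"
      using nonzero by (auto intro!: joukowski_in_closure_outside simp: norm_divide)
    ultimately show ?thesis
      unfolding K_def
      by (intro continuous_intros continuous_on_compose2[OF f_continuous]
          continuous_on_compose2[OF g_continuous])
  qed
  moreover have "K w = 0" if "cmod w = 1" for w
  proof -
    have "w * cnj w = 1"
      using that complex_norm_square[of w] by simp
    then have "1 / cnj w = w"
      by (metis divide_eq_eq mult.commute mult_zero_right zero_neq_one)
    then show ?thesis
      using that inner_radius_less_1 by (simp add: K_def f_eq_cnj_g joukowski_mem_ellipse_iff)
  qed
  ultimately have "K w = 0"
    using holomorphic_annulus_vanishing_on_unit_circle[OF inner_radius_pos inner_radius_less_1] assms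
    by blast
  then show ?thesis
    using assms nonzero by (simp add: K_def reflected_g_def)
qed

lemma reflected_g_eq_0:
  assumes "cmod w < 1"
  shows "reflected_g w = 0"
proof -
  let ?\<kappa> = "complex_of_real (B / A)"
  have invariant: "reflected_g (?\<kappa> / v) = reflected_g v"
    if "cmod ?\<kappa> < cmod v" "cmod v < 1" for v
  proof -
    have v: "inner_radius < cmod v"
      using that(1) by (simp only: norm_B_div_A_eq_inner_radius)
    then have "v \<noteq> 0"
      using inner_radius_nonneg by auto
    have "cmod (?\<kappa> / v) = inner_radius / cmod v"
      by (simp only: norm_divide norm_B_div_A_eq_inner_radius)
    moreover have "inner_radius * cmod v < inner_radius"
      using that inner_radius_pos by simp
    ultimately have "inner_radius < cmod (?\<kappa> / v)" "cmod (?\<kappa> / v) < 1"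
      using v \<open>v \<noteq> 0\<close> by (simp_all add: less_divide_eq divide_less_eq)
    then have "reflected_g (?\<kappa> / v) = f (joukowski (?\<kappa> / v))"
      by (simp add: f_joukowski_eq_reflected_g)
    also have "\<dots> = f (joukowski v)"
      using joukowski_inversion[OF \<open>v \<noteq> 0\<close>] by (rule arg_cong)
    also have "\<dots> = reflected_g v"
      using that v by (simp add: f_joukowski_eq_reflected_g)
    finally show ?thesis .
  qed
  have "cmod ?\<kappa> < 1"
    using inner_radius_less_1 by (simp only: norm_B_div_A_eq_inner_radius)
  then have "reflected_g w = reflected_g 0"
    by (rule holomorphic_inversion_invariant_imp_constant[OF holomorphic_reflected_g _ invariant assms])
  then show ?thesis
    by (simp add: reflected_g_def)
qed

lemma g_eq_0:
  assumes "z \<in> closure (outside \<Gamma>)"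
  shows "g z = 0"
proof (rule continuous_constant_on_closure[OF g_continuous _ assms])
  fix z
  assume "z \<in> outside \<Gamma>"
  obtain w where w: "inner_radius < cmod w" "joukowski w = z"
    using joukowski_surj by blast
  then have "1 < cmod w"
    using \<open>z \<in> outside \<Gamma>\<close> joukowski_mem_outside_iff by blast
  then have "cmod (1 / cnj w) < 1" "1 / cnj w \<noteq> 0"
    by (auto simp: norm_divide divide_less_eq)
  then have "reflected_g (1 / cnj w) = 0"
    by (simp add: reflected_g_eq_0)
  then show "g z = 0"
    using \<open>1 / cnj w \<noteq> 0\<close> w by (simp add: reflected_g_def)
qed

lemma f_eq_0:
  assumes "z \<in> closure (inside \<Gamma>)"
  shows "f z = 0"
proof (rule holomorphic_vanishing_on_frontier[OF f_holomorphic _ _ f_continuous _ assms])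
  show "open (inside \<Gamma>)" "bounded (inside \<Gamma>)"
    using compact_ellipse by (simp_all add: open_inside compact_imp_closed bounded_inside
        compact_imp_bounded)
  show "f z = 0" if "z \<in> frontier (inside \<Gamma>)" for z
  proof -
    have "z \<in> \<Gamma>"
      using that frontier_inside_subset compact_imp_closed[OF compact_ellipse] by blast
    then show ?thesis
      using f_eq_cnj_g g_eq_0 ellipse_subset_closure_outside by auto
  qed
qed

end

theorem theorem3p21:
  fixes c :: complex and a b theta :: real and f g :: "complex \<Rightarrow> complex"
  assumes "a > 0" and "b > 0" and "a \<noteq> b"
    and "matching_solution (ellipse c a b theta) f g"
  shows "(\<exists>k. \<forall>z\<in>closure (inside (ellipse c a b theta)). f z = k) \<and>
         (\<exists>k. \<forall>z\<in>closure (outside (ellipse c a b theta)). g z = k)"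
proof -
  interpret ellipse_matching c a b theta f g
    using assms by unfold_locales
  show ?thesis
    using f_eq_0 g_eq_0 by blast
qed

end
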